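(* Let $(X,d)$ be a compact metric space, $k\geq1$, $T:\mathbb{Z}^k\times X\to X$ a continuous action, and $c>0$ such that any two distinct $x,y\in X$ satisfy $\sup_{u\in\mathbb{Z}^k}d(T^ux,T^uy)>2c$. Then \[\limsup_{N\to\infty}\frac{\mathrm{widim}_{2c}\left(X,d^T_{[-N,N]^k}\right)}{N^{k-1}}<\infty.\]
   Context: For $\Omega\subset\mathbb{R}^k$, $d^T_\Omega(x,y)=\sup_{u\in\Omega\cap\mathbb{Z}^k}d(T^ux,T^uy)$. The order of an open cover is the largest $n\geq0$ such that some $n+1$ distinct members have nonempty intersection; $\mathrm{widim}_\varepsilon(X,\rho)$ is the minimum order of an open cover of $X$ all of whose members have $\rho$-diameter $\leq\varepsilon$. *)

theory Defs
  imports "HOL-Analysis.Analysis" "HOL-Library.Extended_Real"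
begin

text \<open>Elements of Z^k are encoded as functions nat => int vanishing outside {..<k}.\<close>
definition Zk :: "nat \<Rightarrow> (nat \<Rightarrow> int) set" where
  "Zk k = {u. \<forall>i\<ge>k. u i = 0}"

definition cube :: "nat \<Rightarrow> nat \<Rightarrow> (nat \<Rightarrow> int) set" where
  "cube k N = {u \<in> Zk k. \<forall>i<k. \<bar>u i\<bar> \<le> int N}"

definition continuous_Zk_action ::
  "nat \<Rightarrow> 'a::metric_space set \<Rightarrow> ((nat \<Rightarrow> int) \<Rightarrow> 'a \<Rightarrow> 'a) \<Rightarrow> bool" where
  "continuous_Zk_action k X T \<longleftrightarrow>
     (\<forall>u\<in>Zk k. T u ` X \<subseteq> X \<and> continuous_on X (T u)) \<and>
     (\<forall>x\<in>X. T (\<lambda>_. 0) x = x) \<and>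
     (\<forall>u\<in>Zk k. \<forall>v\<in>Zk k. \<forall>x\<in>X. T (\<lambda>i. u i + v i) x = T u (T v x))"

definition dT :: "((nat \<Rightarrow> int) \<Rightarrow> 'a \<Rightarrow> 'a::metric_space) \<Rightarrow> (nat \<Rightarrow> int) set \<Rightarrow> 'a \<Rightarrow> 'a \<Rightarrow> real" where
  "dT T \<Omega> x y = (SUP u\<in>\<Omega>. dist (T u x) (T u y))"

definition cover_order :: "'a set set \<Rightarrow> enat" where
  "cover_order \<U> = Sup {enat n | n. \<exists>F\<subseteq>\<U>. finite F \<and> card F = n + 1 \<and> \<Inter>F \<noteq> {}}"

definition widim :: "real \<Rightarrow> 'a::topological_space set \<Rightarrow> ('a \<Rightarrow> 'a \<Rightarrow> real) \<Rightarrow> enat" where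
  "widim \<epsilon> X \<rho> = Inf {cover_order \<U> | \<U>.
      (\<forall>U\<in>\<U>. openin (top_of_set X) U) \<and> \<Union>\<U> = X \<and>
      (\<forall>U\<in>\<U>. \<forall>x\<in>U. \<forall>y\<in>U. \<rho> x y \<le> \<epsilon>)}"

end

theory Submission
  imports Defs
begin

(* By expansivity and compactness there is L such that any two points that stay 2c-close along
   the cube [-L,L]^k are c-close. So points that are 2c-close along [-N,N]^k are automatically
   c-close along the inner cube [-(N-L),N-L]^k, and only the boundary layer B of [-N,N]^k, which
   has O(N^(k-1)) elements, has to be controlled by the cover. Pull a fixed finite cover by m
   c-small open sets back along every u in B and refine all these covers simultaneously; this
   gives an open cover in which every point lies in at most |B| m + 1 sets. On each member of it,
   being c-close along the whole cube is an equivalence relation (two points of a class are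
   2c-close, hence c-close), and the classes form the required cover. *)

section \<open>Covers of bounded multiplicity\<close>

definition open_cover_of :: "'a::topological_space set \<Rightarrow> 'a set set \<Rightarrow> bool" where
  "open_cover_of X \<U> \<longleftrightarrow> (\<forall>U\<in>\<U>. openin (top_of_set X) U) \<and> \<Union>\<U> = X"

definition multiplicity_le :: "'a set set \<Rightarrow> nat \<Rightarrow> bool" where
  "multiplicity_le \<U> n \<longleftrightarrow> (\<forall>y. finite {U\<in>\<U>. y \<in> U} \<and> card {U\<in>\<U>. y \<in> U} \<le> n)"

lemma multiplicity_le_subset_image:
  assumes "\<And>y. {U\<in>\<U>. y \<in> U} \<subseteq> g y ` S y" "\<And>y. finite (S y)" "\<And>y. card (S y) \<le> n"
  shows "multiplicity_le \<U> n"
  unfolding multiplicity_le_def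
proof
  fix y
  have fin: "finite (g y ` S y)" using assms(2) by simp
  have "card {U\<in>\<U>. y \<in> U} \<le> card (g y ` S y)" by (rule card_mono[OF fin assms(1)])
  also have "\<dots> \<le> card (S y)" by (rule card_image_le[OF assms(2)])
  also have "\<dots> \<le> n" by (rule assms(3))
  finally show "finite {U\<in>\<U>. y \<in> U} \<and> card {U\<in>\<U>. y \<in> U} \<le> n"
    using finite_subset[OF assms(1) fin] by simp
qed

lemma multiplicity_le_card:
  assumes "finite \<U>" "card \<U> \<le> n"
  shows "multiplicity_le \<U> n"
  by (rule multiplicity_le_subset_image[of _ "\<lambda>_. id" "\<lambda>_. \<U>"]) (use assms in auto)

lemma cover_order_le_multiplicity:
  assumes "multiplicity_le \<U> (Suc n)"
  shows "cover_order \<U> \<le> enat n"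
  unfolding cover_order_def
proof (rule Sup_least)
  fix e assume "e \<in> {enat n |n. \<exists>F\<subseteq>\<U>. finite F \<and> card F = n + 1 \<and> \<Inter> F \<noteq> {}}"
  then obtain n' F where e: "e = enat n'" and F: "F \<subseteq> \<U>" "card F = n' + 1" "\<Inter> F \<noteq> {}"
    by blast
  then obtain y where "y \<in> \<Inter> F" by blast
  with F(1) have "F \<subseteq> {U\<in>\<U>. y \<in> U}" by blast
  then have "card F \<le> card {U\<in>\<U>. y \<in> U}"
    using assms unfolding multiplicity_le_def by (intro card_mono) auto
  moreover have "card {U\<in>\<U>. y \<in> U} \<le> Suc n" using assms unfolding multiplicity_le_def by blast
  ultimately have "n' \<le> n" using F(2) by linarith
  then show "e \<le> enat n" using e by simp
qed

lemma widim_le_multiplicity: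
  assumes "open_cover_of X \<U>" "multiplicity_le \<U> (Suc n)"
    and "\<forall>U\<in>\<U>. \<forall>x\<in>U. \<forall>y\<in>U. \<rho> x y \<le> \<epsilon>"
  shows "widim \<epsilon> X \<rho> \<le> enat n"
proof -
  have "widim \<epsilon> X \<rho> \<le> cover_order \<U>"
    unfolding widim_def by (rule Inf_lower) (use assms(1,3) in \<open>auto simp: open_cover_of_def\<close>)
  also have "\<dots> \<le> enat n" by (rule cover_order_le_multiplicity[OF assms(2)])
  finally show ?thesis .
qed

lemma compact_small_finite_open_cover:
  fixes X :: "'a::metric_space set"
  assumes "compact X" "\<epsilon> > 0"
  obtains \<U> where "finite \<U>" "open_cover_of X \<U>" "\<forall>U\<in>\<U>. \<forall>x\<in>U. \<forall>y\<in>U. dist x y < \<epsilon>"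
proof -
  obtain D where D: "D \<subseteq> X" "finite D" "X \<subseteq> (\<Union>x\<in>D. ball x (\<epsilon>/2))"
    using compactE_image[OF assms(1), of X "\<lambda>x. ball x (\<epsilon>/2)"] assms(2) by force
  define \<U> where "\<U> = (\<lambda>x. X \<inter> ball x (\<epsilon>/2)) ` D"
  have "dist y z < \<epsilon>" if "dist x y < \<epsilon>/2" "dist x z < \<epsilon>/2" for x y z :: 'a
    using dist_triangle3[of y z x] that by linarith
  then have "\<forall>U\<in>\<U>. \<forall>y\<in>U. \<forall>z\<in>U. dist y z < \<epsilon>" unfolding \<U>_def by auto
  moreover have "open_cover_of X \<U>"
    unfolding open_cover_of_def \<U>_def using D by (auto intro: openin_open_Int)
  ultimately show ?thesis using that D(2) unfolding \<U>_def by blast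
qed

lemma open_cover_of_preimage:
  assumes g: "continuous_on X g" "g \<in> X \<rightarrow> X" and \<U>: "open_cover_of X \<U>"
  shows "open_cover_of X ((\<lambda>U. X \<inter> g -` U) ` \<U>)"
proof -
  have "openin (top_of_set X) (X \<inter> g -` U)" if "U \<in> \<U>" for U
    using continuous_openin_preimage[OF g] \<U> that unfolding open_cover_of_def by blast
  moreover have "X \<subseteq> (\<Union>U\<in>\<U>. X \<inter> g -` U)"
  proof
    fix y assume "y \<in> X"
    then obtain U where "U \<in> \<U>" "g y \<in> U" using g(2) \<U> unfolding open_cover_of_def by blast
    with \<open>y \<in> X\<close> show "y \<in> (\<Union>U\<in>\<U>. X \<inter> g -` U)" by blast
  qed
  ultimately show ?thesis unfolding open_cover_of_def by blast
qed

section \<open>Common refinements\<close>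

definition gap_side :: "real \<Rightarrow> real \<Rightarrow> real \<Rightarrow> real set" where
  "gap_side a b s = {t. (b < s \<longrightarrow> b < t) \<and> (s < a \<longrightarrow> t < a)}"

definition gap_side_set :: "('q \<Rightarrow> 'a \<Rightarrow> real) \<Rightarrow> 'q set \<Rightarrow> 'a set \<Rightarrow> real \<Rightarrow> real \<Rightarrow> 'a \<Rightarrow> 'a set"
  where "gap_side_set \<psi> P X a b x = {y\<in>X. \<forall>q\<in>P. \<psi> q y \<in> gap_side a b (\<psi> q x)}"

lemma open_gap_side: "open (gap_side a b s)"
  unfolding gap_side_def
  by (cases "b < s"; cases "s < a") (simp_all add: open_Collect_less open_Collect_conj)

lemma gap_side_eq:
  assumes "a < b" "s < a \<or> b < s" "t \<in> gap_side a b s"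
  shows "gap_side a b t = gap_side a b s"
proof -
  have "(b < t \<longleftrightarrow> b < s) \<and> (t < a \<longleftrightarrow> s < a)" using assms unfolding gap_side_def by auto
  then show ?thesis unfolding gap_side_def by simp
qed

lemma openin_gap_side_set:
  assumes "finite P" "\<And>q. q \<in> P \<Longrightarrow> continuous_on X (\<psi> q)"
  shows "openin (top_of_set X) (gap_side_set \<psi> P X a b x)"
proof -
  have "openin (top_of_set X) ((\<Inter>q\<in>P. X \<inter> \<psi> q -` gap_side a b (\<psi> q x)) \<inter> topspace (top_of_set X))"
    using assms by (intro openin_INT continuous_openin_preimage_gen open_gap_side)
  also have "\<dots> = gap_side_set \<psi> P X a b x" unfolding gap_side_set_def by auto
  finally show ?thesis .
qed

lemma gap_side_set_eq:
  assumes "a < b" "\<forall>q\<in>P. \<psi> q x < a \<or> b < \<psi> q x" "y \<in> gap_side_set \<psi> P X a b x"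
  shows "gap_side_set \<psi> P X a b y = gap_side_set \<psi> P X a b x"
proof -
  have "gap_side a b (\<psi> q y) = gap_side a b (\<psi> q x)" if "q \<in> P" for q
    using assms that gap_side_eq[OF assms(1)] unfolding gap_side_set_def by blast
  then show ?thesis unfolding gap_side_set_def by auto
qed

lemma exists_level_avoiding:
  fixes r :: "'q \<Rightarrow> real" and a b :: "nat \<Rightarrow> real"
  assumes fin: "finite {q\<in>P. 0 < r q}" and card: "card {q\<in>P. 0 < r q} \<le> M"
    and a_pos: "\<And>i. 0 < a i" and sep: "\<And>i i'. i < i' \<Longrightarrow> b i < a i'"
  shows "\<exists>i\<le>M. \<forall>q\<in>P. r q < a i \<or> b i < r q"
proof (rule ccontr)
  assume "\<not> ?thesis"
  then have "\<forall>i\<in>{..M}. \<exists>q. q \<in> P \<and> a i \<le> r q \<and> r q \<le> b i"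
    by (auto simp: not_less)
  then obtain g where g: "\<And>i. i \<le> M \<Longrightarrow> g i \<in> P \<and> a i \<le> r (g i) \<and> r (g i) \<le> b i"
    by (metis atMost_iff)
  have "inj_on g {..M}"
  proof (rule inj_onI)
    fix i i' assume i: "i \<in> {..M}" and i': "i' \<in> {..M}" and eq: "g i = g i'"
    have "\<not> i < i'" if "i \<in> {..M}" "i' \<in> {..M}" "g i = g i'" for i i'
      using g[of i] g[of i'] sep[of i i'] that by auto
    with i i' eq show "i = i'" by (metis linorder_neqE_nat)
  qed
  moreover have "g ` {..M} \<subseteq> {q\<in>P. 0 < r q}"
    using g a_pos by (force intro: less_le_trans)
  ultimately have "Suc M \<le> card {q\<in>P. 0 < r q}"
    using card_inj_on_le[OF _ _ fin] by fastforce
  with card show False by simp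
qed

lemma exists_separated_gaps:
  assumes "0 < \<delta>"
  obtains a b :: "nat \<Rightarrow> real" where "\<And>i. 0 < a i" "\<And>i. a i < b i"
    "\<And>i i'. i < i' \<Longrightarrow> b i < a i'" "\<And>i. i \<le> M \<Longrightarrow> b i < \<delta>"
proof
  define s where "s = \<delta> / (2 * M + 3)"
  have s: "0 < s" unfolding s_def using assms by simp
  show "0 < (2 * i + 1) * s" for i :: nat using s by simp
  show "(2 * i + 1) * s < (2 * i + 2) * s" for i :: nat using s by simp
  show "(2 * i + 2) * s < (2 * i' + 1) * s" if "i < i'" for i i' :: nat using s that by simp
  show "(2 * i + 2) * s < \<delta>" if "i \<le> M" for i :: nat
  proof -
    have "(2 * i + 2) * s \<le> (2 * M + 2) * s" using that s by (simp add: mult_right_mono)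
    also have "\<dots> < \<delta>" unfolding s_def using assms by (simp add: field_simps)
    finally show ?thesis .
  qed
qed

text \<open>Every point avoids one of the M + 1 gaps with all its positive values, and the sets of
  one level are equal or disjoint.\<close>
lemma level_set_cover:
  fixes \<psi> :: "'q \<Rightarrow> 'a::topological_space \<Rightarrow> real"
  assumes P: "finite P" and cont: "\<And>q. q \<in> P \<Longrightarrow> continuous_on X (\<psi> q)"
    and card: "\<And>y. y \<in> X \<Longrightarrow> card {q\<in>P. 0 < \<psi> q y} \<le> M" and \<delta>: "0 < \<delta>"
  shows "\<exists>\<V>. open_cover_of X \<V> \<and> multiplicity_le \<V> (Suc M) \<and>
           (\<forall>V\<in>\<V>. \<exists>x\<in>X. \<forall>q\<in>P. \<delta> \<le> \<psi> q x \<longrightarrow> (\<forall>y\<in>V. 0 < \<psi> q y))"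
proof -
  obtain a b :: "nat \<Rightarrow> real" where a_pos: "\<And>i. 0 < a i" and ab: "\<And>i. a i < b i"
    and sep: "\<And>i i'. i < i' \<Longrightarrow> b i < a i'" and b_lt: "\<And>i. i \<le> M \<Longrightarrow> b i < \<delta>"
    using exists_separated_gaps[OF \<delta>] by metis
  define good where "good i x \<longleftrightarrow> (\<forall>q\<in>P. \<psi> q x < a i \<or> b i < \<psi> q x)" for i x
  define V where "V i = gap_side_set \<psi> P X (a i) (b i)" for i
  define \<V> where "\<V> = {V i x | i x. i \<le> M \<and> x \<in> X \<and> good i x}"
  have "\<exists>i\<le>M. good i y" if "y \<in> X" for y
    unfolding good_def using that
    by (intro exists_level_avoiding[OF _ card a_pos sep]) (use P in auto)
  moreover have "y \<in> V i y" if "y \<in> X" for i y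
    using that unfolding V_def gap_side_set_def gap_side_def by auto
  ultimately have "X \<subseteq> \<Union>\<V>" unfolding \<V>_def by blast
  moreover have "\<Union>\<V> \<subseteq> X" unfolding \<V>_def V_def gap_side_set_def by auto
  moreover have "openin (top_of_set X) (V i x)" for i x
    unfolding V_def by (rule openin_gap_side_set[OF P cont])
  ultimately have "open_cover_of X \<V>" unfolding open_cover_of_def \<V>_def by blast
  moreover have "multiplicity_le \<V> (Suc M)"
  proof -
    have "{W\<in>\<V>. y \<in> W} \<subseteq> (\<lambda>i. V i y) ` {..M}" for y
    proof
      fix W assume "W \<in> {W\<in>\<V>. y \<in> W}"
      then obtain i x where W: "W = V i x" "i \<le> M"
        and gx: "\<forall>q\<in>P. \<psi> q x < a i \<or> b i < \<psi> q x" and yx: "y \<in> gap_side_set \<psi> P X (a i) (b i) x"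
        unfolding \<V>_def good_def V_def by blast
      then have "W = V i y" unfolding V_def using gap_side_set_eq[OF ab gx yx] by simp
      with W(2) show "W \<in> (\<lambda>i. V i y) ` {..M}" by simp
    qed
    then show ?thesis by (rule multiplicity_le_subset_image) auto
  qed
  moreover have "\<exists>x\<in>X. \<forall>q\<in>P. \<delta> \<le> \<psi> q x \<longrightarrow> (\<forall>y\<in>W. 0 < \<psi> q y)" if "W \<in> \<V>" for W
  proof -
    obtain i x where W: "W = V i x" "i \<le> M" "x \<in> X" using \<open>W \<in> \<V>\<close> unfolding \<V>_def by blast
    have "0 < \<psi> q y" if "q \<in> P" "\<delta> \<le> \<psi> q x" "y \<in> W" for q y
    proof -
      have "\<psi> q y \<in> gap_side (a i) (b i) (\<psi> q x)"
        using that(1,3) W(1) unfolding V_def gap_side_set_def by blast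
      moreover have "b i < \<psi> q x" using b_lt[OF W(2)] that(2) by linarith
      ultimately have "b i < \<psi> q y" unfolding gap_side_def by blast
      then show ?thesis using a_pos[of i] ab[of i] by linarith
    qed
    with W show ?thesis by blast
  qed
  ultimately show ?thesis by blast
qed

text \<open>The case U = X avoids infdist to the empty set, which is 0.\<close>
definition dist_complement :: "'a::metric_space set \<Rightarrow> 'a set \<Rightarrow> 'a \<Rightarrow> real" where
  "dist_complement X U x = (if U = X then 1 else infdist x (X - U))"

lemma continuous_on_dist_complement: "continuous_on X (dist_complement X U)"
  unfolding dist_complement_def by (cases "U = X") (auto intro!: continuous_intros)

lemma dist_complement_nonneg: "0 \<le> dist_complement X U x"
  unfolding dist_complement_def by (simp add: infdist_nonneg)

lemma dist_complement_pos_iff: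
  assumes U: "openin (top_of_set X) U" and x: "x \<in> X"
  shows "0 < dist_complement X U x \<longleftrightarrow> x \<in> U"
proof (cases "U = X")
  case True
  with x show ?thesis unfolding dist_complement_def by simp
next
  case False
  have ne: "X - U \<noteq> {}" using False U openin_imp_subset by blast
  have "0 < infdist x (X - U) \<longleftrightarrow> x \<in> U"
  proof
    assume "0 < infdist x (X - U)"
    then show "x \<in> U" using x by (metis DiffI infdist_zero less_irrefl)
  next
    assume "x \<in> U"
    obtain S where S: "open S" "U = X \<inter> S" using U by (auto simp: openin_open)
    have "x \<notin> closure (X - U)"
      using \<open>x \<in> U\<close> S by (auto simp: closure_iff_nhds_not_empty)
    then have "infdist x (X - U) \<noteq> 0" using in_closure_iff_infdist_zero[OF ne] by blast
    then show "0 < infdist x (X - U)" by (metis infdist_nonneg order_le_neq_trans)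
  qed
  with False show ?thesis unfolding dist_complement_def by simp
qed

lemma open_cover_dist_complement_pos:
  assumes "open_cover_of X \<U>" "x \<in> X"
  shows "\<exists>U\<in>\<U>. 0 < dist_complement X U x"
proof -
  obtain U where "U \<in> \<U>" "x \<in> U" using assms unfolding open_cover_of_def by blast
  moreover from this have "openin (top_of_set X) U" using assms(1) unfolding open_cover_of_def by blast
  ultimately show ?thesis using dist_complement_pos_iff assms(2) by blast
qed

lemma compact_uniformly_positive:
  fixes f :: "'i \<Rightarrow> 'a::topological_space \<Rightarrow> real"
  assumes X: "compact X" and I: "finite I"
    and cont: "\<And>i. i \<in> I \<Longrightarrow> continuous_on X (f i)"
    and nonneg: "\<And>i x. i \<in> I \<Longrightarrow> x \<in> X \<Longrightarrow> 0 \<le> f i x"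
    and pos: "\<And>x. x \<in> X \<Longrightarrow> \<exists>i\<in>I. 0 < f i x"
  shows "\<exists>\<delta>>0. \<forall>x\<in>X. \<exists>i\<in>I. \<delta> \<le> f i x"
proof (cases "X = {}")
  case True
  then show ?thesis by (intro exI[of _ 1]) auto
next
  case False
  define g where "g x = (\<Sum>i\<in>I. f i x)" for x
  have "continuous_on X g" unfolding g_def by (intro continuous_on_sum cont)
  then obtain x0 where x0: "x0 \<in> X" "\<And>x. x \<in> X \<Longrightarrow> g x0 \<le> g x"
    using continuous_attains_inf[OF X False] by blast
  obtain i0 where i0: "i0 \<in> I" "0 < f i0 x0" using pos[OF x0(1)] by blast
  have g0: "0 < g x0"
    unfolding g_def using i0 nonneg x0(1) by (intro sum_pos2[OF I i0(1)]) auto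
  have cI: "0 < card I" using I i0(1) card_gt_0_iff by blast
  show ?thesis
  proof (intro exI[of _ "g x0 / card I"] conjI ballI)
    show "0 < g x0 / card I" using g0 cI by simp
  next
    fix x assume x: "x \<in> X"
    show "\<exists>i\<in>I. g x0 / card I \<le> f i x"
    proof (rule ccontr)
      assume "\<not> ?thesis"
      then have "g x < card I * (g x0 / card I)"
        unfolding g_def by (intro sum_bounded_above_strict) (use cI in auto)
      with x0(2)[OF x] cI show False by simp
    qed
  qed
qed

lemma compact_uniformly_positive_family:
  fixes f :: "'i \<Rightarrow> 'a::topological_space \<Rightarrow> real"
  assumes X: "compact X" and J: "finite J" and I: "\<And>j. j \<in> J \<Longrightarrow> finite (I j)"
    and cont: "\<And>i. continuous_on X (f i)" and nonneg: "\<And>i x. 0 \<le> f i x"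
    and pos: "\<And>j x. j \<in> J \<Longrightarrow> x \<in> X \<Longrightarrow> \<exists>i\<in>I j. 0 < f i x"
  shows "\<exists>\<delta>>0. \<forall>j\<in>J. \<forall>x\<in>X. \<exists>i\<in>I j. \<delta> \<le> f i x"
proof -
  have "\<exists>\<delta>>0. \<forall>x\<in>X. \<exists>i\<in>I j. \<delta> \<le> f i x" if "j \<in> J" for j
    using compact_uniformly_positive[OF X I[OF that] cont nonneg pos[OF that]] by blast
  then obtain \<delta>j where \<delta>j: "\<And>j. j \<in> J \<Longrightarrow> 0 < \<delta>j j"
    "\<And>j x. j \<in> J \<Longrightarrow> x \<in> X \<Longrightarrow> \<exists>i\<in>I j. \<delta>j j \<le> f i x"
    by metis
  define \<delta> where "\<delta> = Min (insert 1 (\<delta>j ` J))"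
  have "0 < \<delta>" unfolding \<delta>_def using J \<delta>j(1) by simp
  moreover have "\<delta> \<le> \<delta>j j" if "j \<in> J" for j unfolding \<delta>_def using J that by simp
  ultimately show ?thesis using \<delta>j(2) by (meson order_trans)
qed

text \<open>Apply the level set construction to the functions dist_complement X U of all members U of
  all the covers; a value \<ge> \<delta> at the base point forces the whole level set into U.\<close>
lemma compact_common_refinement:
  fixes X :: "'a::metric_space set" and \<U> :: "'j \<Rightarrow> 'a set set"
  assumes X: "compact X" and J: "finite J"
    and fin: "\<And>j. j \<in> J \<Longrightarrow> finite (\<U> j)"
    and cov: "\<And>j. j \<in> J \<Longrightarrow> open_cover_of X (\<U> j)"
    and mult: "\<And>j. j \<in> J \<Longrightarrow> multiplicity_le (\<U> j) m"
  shows "\<exists>\<V>. open_cover_of X \<V> \<and> multiplicity_le \<V> (Suc (card J * m)) \<and>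
           (\<forall>V\<in>\<V>. \<forall>j\<in>J. \<exists>U\<in>\<U> j. V \<subseteq> U)"
proof -
  define P where "P = Sigma J \<U>"
  define \<psi> where "\<psi> q = dist_complement X (snd q)" for q :: "'j \<times> 'a set"
  have \<psi>_cont: "continuous_on X (\<psi> q)" for q
    unfolding \<psi>_def by (rule continuous_on_dist_complement)
  have \<psi>_pos: "0 < \<psi> q x \<longleftrightarrow> x \<in> snd q" if "q \<in> P" "x \<in> X" for q x
  proof -
    obtain j U where q: "q = (j, U)" "j \<in> J" "U \<in> \<U> j" using \<open>q \<in> P\<close> unfolding P_def by auto
    then have "openin (top_of_set X) U" using cov unfolding open_cover_of_def by blast
    with q(1) \<open>x \<in> X\<close> show ?thesis unfolding \<psi>_def by (simp add: dist_complement_pos_iff)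
  qed
  have "\<exists>U\<in>\<U> j. 0 < dist_complement X U x" if "j \<in> J" "x \<in> X" for j x
    using open_cover_dist_complement_pos[OF cov] that by blast
  then obtain \<delta> where \<delta>: "0 < \<delta>" "\<forall>j\<in>J. \<forall>x\<in>X. \<exists>U\<in>\<U> j. \<delta> \<le> dist_complement X U x"
    using compact_uniformly_positive_family[where f = "dist_complement X" and I = \<U>, OF X J fin
        continuous_on_dist_complement dist_complement_nonneg] by blast
  have card_pos: "card {q\<in>P. 0 < \<psi> q y} \<le> card J * m" if y: "y \<in> X" for y
  proof -
    have "{q\<in>P. 0 < \<psi> q y} = {q\<in>P. y \<in> snd q}" using \<psi>_pos[OF _ y] by blast
    also have "\<dots> = Sigma J (\<lambda>j. {U\<in>\<U> j. y \<in> U})" unfolding P_def by auto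
    also have "card \<dots> = (\<Sum>j\<in>J. card {U\<in>\<U> j. y \<in> U})"
      using J fin by (intro card_SigmaI) auto
    also have "\<dots> \<le> card J * m"
      using sum_bounded_above[of J "\<lambda>j. card {U\<in>\<U> j. y \<in> U}" m] mult
      unfolding multiplicity_le_def by auto
    finally show ?thesis .
  qed
  have "finite P" unfolding P_def using J fin by auto
  then obtain \<V> where \<V>: "open_cover_of X \<V>" "multiplicity_le \<V> (Suc (card J * m))"
    and sides: "\<forall>V\<in>\<V>. \<exists>x\<in>X. \<forall>q\<in>P. \<delta> \<le> \<psi> q x \<longrightarrow> (\<forall>y\<in>V. 0 < \<psi> q y)"
    using level_set_cover[of P X \<psi> "card J * m" \<delta>, OF _ \<psi>_cont card_pos \<delta>(1)] by blast
  have "\<exists>U\<in>\<U> j. V \<subseteq> U" if V: "V \<in> \<V>" and j: "j \<in> J" for V j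
  proof -
    obtain x where x: "x \<in> X" and xV: "\<forall>q\<in>P. \<delta> \<le> \<psi> q x \<longrightarrow> (\<forall>y\<in>V. 0 < \<psi> q y)"
      using sides V by blast
    obtain U where U: "U \<in> \<U> j" "\<delta> \<le> \<psi> (j, U) x" using \<delta>(2) j x unfolding \<psi>_def by auto
    have jU: "(j, U) \<in> P" unfolding P_def using j U(1) by simp
    have "V \<subseteq> X" using \<V>(1) V unfolding open_cover_of_def by blast
    with xV jU U(2) have "V \<subseteq> U" using \<psi>_pos[OF jU] by auto
    with U(1) show ?thesis by blast
  qed
  with \<V> show ?thesis by blast
qed

section \<open>Splitting a cover along a distance gap\<close>

definition close_class :: "('i \<Rightarrow> 'a \<Rightarrow> 'b::metric_space) \<Rightarrow> 'i set \<Rightarrow> real \<Rightarrow> 'a set \<Rightarrow> 'a \<Rightarrow> 'a set"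
  where "close_class f A c V x = {y\<in>V. \<forall>u\<in>A. dist (f u x) (f u y) < c}"

lemma openin_close_class:
  assumes A: "finite A" and cont: "\<forall>u\<in>A. continuous_on X (f u)" and V: "openin (top_of_set X) V"
  shows "openin (top_of_set X) (close_class f A c V x)"
proof -
  define B where "B = (\<Inter>u\<in>A. X \<inter> (\<lambda>y. dist (f u x) (f u y)) -` {..<c}) \<inter> topspace (top_of_set X)"
  have "openin (top_of_set X) B"
    unfolding B_def using A cont
    by (intro openin_INT continuous_openin_preimage_gen continuous_intros) auto
  then have "openin (top_of_set X) (V \<inter> B)" using V by blast
  also have "V \<inter> B = close_class f A c V x"
    unfolding B_def close_class_def using openin_imp_subset[OF V] by auto
  finally show ?thesis .
qed

lemma close_class_pairwise:
  assumes gap: "\<forall>y\<in>V. \<forall>z\<in>V. (\<forall>u\<in>A. dist (f u y) (f u z) < 2 * c) \<longrightarrow>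
                  (\<forall>u\<in>A. dist (f u y) (f u z) < c)"
    and yz: "y \<in> close_class f A c V x" "z \<in> close_class f A c V x"
  shows "\<forall>u\<in>A. dist (f u y) (f u z) < c"
proof -
  have "dist (f u y) (f u z) < 2 * c" if "u \<in> A" for u
  proof -
    have "dist (f u x) (f u y) < c" "dist (f u x) (f u z) < c"
      using yz that unfolding close_class_def by auto
    then show ?thesis using dist_triangle3[of "f u y" "f u z" "f u x"] by linarith
  qed
  moreover have "y \<in> V" "z \<in> V" using yz unfolding close_class_def by auto
  ultimately show ?thesis using gap by blast
qed

lemma close_class_eq:
  assumes c: "0 < c"
    and gap: "\<forall>y\<in>V. \<forall>z\<in>V. (\<forall>u\<in>A. dist (f u y) (f u z) < 2 * c) \<longrightarrow>
                  (\<forall>u\<in>A. dist (f u y) (f u z) < c)"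
    and x: "x \<in> V" and y: "y \<in> close_class f A c V x"
  shows "close_class f A c V y = close_class f A c V x"
proof
  have xC: "x \<in> close_class f A c V x" using x c unfolding close_class_def by simp
  have yV: "y \<in> V" using y unfolding close_class_def by simp
  have "x \<in> close_class f A c V y"
    using close_class_pairwise[OF gap y xC] x unfolding close_class_def by simp
  then show "close_class f A c V y \<subseteq> close_class f A c V x"
    using close_class_pairwise[OF gap] unfolding close_class_def by blast
  show "close_class f A c V x \<subseteq> close_class f A c V y"
    using close_class_pairwise[OF gap y] yV unfolding close_class_def by blast
qed

lemma refine_cover_by_gap:
  fixes f :: "'i \<Rightarrow> 'a::topological_space \<Rightarrow> 'b::metric_space"
  assumes A: "finite A" and cont: "\<forall>u\<in>A. continuous_on X (f u)" and c: "0 < c"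
    and \<V>: "open_cover_of X \<V>" "multiplicity_le \<V> n"
    and gap: "\<forall>V\<in>\<V>. \<forall>x\<in>V. \<forall>y\<in>V.
               (\<forall>u\<in>A. dist (f u x) (f u y) < 2 * c) \<longrightarrow> (\<forall>u\<in>A. dist (f u x) (f u y) < c)"
  shows "\<exists>\<W>. open_cover_of X \<W> \<and> multiplicity_le \<W> n \<and>
           (\<forall>W\<in>\<W>. \<forall>y\<in>W. \<forall>z\<in>W. \<forall>u\<in>A. dist (f u y) (f u z) < c)"
proof -
  define C where "C = close_class f A c"
  define \<W> where "\<W> = {C V x | V x. V \<in> \<V> \<and> x \<in> V}"
  have gapV: "\<forall>x\<in>V. \<forall>y\<in>V. (\<forall>u\<in>A. dist (f u x) (f u y) < 2 * c) \<longrightarrow>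
      (\<forall>u\<in>A. dist (f u x) (f u y) < c)" if "V \<in> \<V>" for V
    using gap that by blast
  have self: "x \<in> C V x" if "x \<in> V" for V x using that c unfolding C_def close_class_def by simp
  have "\<Union>\<W> = X"
  proof
    show "\<Union>\<W> \<subseteq> X" using \<V>(1) unfolding \<W>_def C_def close_class_def open_cover_of_def by blast
    show "X \<subseteq> \<Union>\<W>" using \<V>(1) self unfolding \<W>_def open_cover_of_def by blast
  qed
  moreover have "openin (top_of_set X) W" if "W \<in> \<W>" for W
    using that \<V>(1) openin_close_class[OF A cont] unfolding \<W>_def C_def open_cover_of_def by blast
  ultimately have "open_cover_of X \<W>" unfolding open_cover_of_def by blast
  moreover have "multiplicity_le \<W> n"
  proof -
    have "{W\<in>\<W>. y \<in> W} \<subseteq> (\<lambda>V. C V y) ` {V\<in>\<V>. y \<in> V}" for y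
    proof
      fix W assume "W \<in> {W\<in>\<W>. y \<in> W}"
      then obtain V x where W: "W = C V x" "V \<in> \<V>" "x \<in> V" "y \<in> W" unfolding \<W>_def by blast
      then have "W = C V y" using close_class_eq[OF c gapV[OF W(2)] W(3)] unfolding C_def by simp
      moreover have "y \<in> V" using W unfolding C_def close_class_def by blast
      ultimately show "W \<in> (\<lambda>V. C V y) ` {V\<in>\<V>. y \<in> V}" using W(2) by blast
    qed
    then show ?thesis
      by (rule multiplicity_le_subset_image) (use \<V>(2) in \<open>auto simp: multiplicity_le_def\<close>)
  qed
  moreover have "\<forall>y\<in>W. \<forall>z\<in>W. \<forall>u\<in>A. dist (f u y) (f u z) < c" if "W \<in> \<W>" for W
    using that close_class_pairwise[OF gapV] unfolding \<W>_def C_def by blast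
  ultimately show ?thesis by blast
qed

section \<open>Integer cubes\<close>

lemma cube_mono: "N \<le> M \<Longrightarrow> cube k N \<subseteq> cube k M"
  unfolding cube_def by force

lemma zero_in_cube: "(\<lambda>_. 0) \<in> cube k N"
  unfolding cube_def Zk_def by simp

lemma cube_subset_Zk: "cube k N \<subseteq> Zk k"
  unfolding cube_def by blast

lemma Zk_in_some_cube:
  assumes "u \<in> Zk k"
  shows "\<exists>L. u \<in> cube k L"
proof -
  have "nat \<bar>u i\<bar> \<le> (\<Sum>i<k. nat \<bar>u i\<bar>)" if "i < k" for i
    by (rule member_le_sum) (use that in auto)
  then have "\<forall>i<k. \<bar>u i\<bar> \<le> int (\<Sum>i<k. nat \<bar>u i\<bar>)" by (simp add: nat_le_iff)
  then show ?thesis using assms unfolding cube_def by blast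
qed

lemma cube_add:
  assumes "u \<in> cube k (N - L)" "v \<in> cube k L" "L \<le> N"
  shows "(\<lambda>i. v i + u i) \<in> cube k N"
  using assms unfolding cube_def Zk_def by (fastforce simp: of_nat_diff)

lemma bij_betw_cube_PiE:
  "bij_betw (\<lambda>u. restrict u {..<k}) (cube k N) (\<Pi>\<^sub>E i\<in>{..<k}. {-int N..int N})"
proof (rule bij_betw_byWitness[where f' = "\<lambda>f i. if i < k then f i else 0"])
  show "\<forall>u\<in>cube k N. (\<lambda>i. if i < k then restrict u {..<k} i else 0) = u"
    unfolding cube_def Zk_def by (auto simp: fun_eq_iff)
  show "\<forall>f\<in>\<Pi>\<^sub>E i\<in>{..<k}. {-int N..int N}. restrict (\<lambda>i. if i < k then f i else 0) {..<k} = f"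
  proof
    fix f assume f: "f \<in> (\<Pi>\<^sub>E i\<in>{..<k}. {-int N..int N})"
    show "restrict (\<lambda>i. if i < k then f i else 0) {..<k} = f"
    proof
      fix i show "restrict (\<lambda>i. if i < k then f i else 0) {..<k} i = f i"
        using PiE_arb[OF f, of i] by simp
    qed
  qed
  show "(\<lambda>u. restrict u {..<k}) ` cube k N \<subseteq> (\<Pi>\<^sub>E i\<in>{..<k}. {-int N..int N})"
  proof (rule image_subsetI)
    fix u assume "u \<in> cube k N"
    then have "u i \<in> {-int N..int N}" if "i < k" for i
      using that unfolding cube_def by auto
    then show "restrict u {..<k} \<in> (\<Pi>\<^sub>E i\<in>{..<k}. {-int N..int N})"
      unfolding restrict_PiE_iff by simp
  qed
  show "(\<lambda>f i. if i < k then f i else 0) ` (\<Pi>\<^sub>E i\<in>{..<k}. {-int N..int N}) \<subseteq> cube k N"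
  proof (rule image_subsetI)
    fix f assume f: "f \<in> (\<Pi>\<^sub>E i\<in>{..<k}. {-int N..int N})"
    have "\<bar>f i\<bar> \<le> int N" if "i < k" for i
    proof -
      have "f i \<in> {-int N..int N}" using PiE_mem[OF f] that by simp
      then show ?thesis by auto
    qed
    then show "(\<lambda>i. if i < k then f i else 0) \<in> cube k N"
      unfolding cube_def Zk_def by simp
  qed
qed

lemma card_cube: "card (cube k N) = (2 * N + 1) ^ k"
proof -
  have "card (cube k N) = card (\<Pi>\<^sub>E i\<in>{..<k}. {-int N..int N})"
    by (rule bij_betw_same_card[OF bij_betw_cube_PiE])
  also have "\<dots> = (2 * N + 1) ^ k" by (simp add: card_PiE nat_add_distrib nat_mult_distrib)
  finally show ?thesis .
qed

lemma finite_cube: "finite (cube k N)"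
  using card_cube[of k N] by (intro card_ge_0_finite) simp

lemma power_diff_le_mult:
  fixes a b :: nat
  assumes "b \<le> a"
  shows "a ^ k - b ^ k \<le> k * (a - b) * a ^ (k - 1)"
proof (induction k)
  case 0
  then show ?case by simp
next
  case (Suc k)
  have "b ^ k \<le> a ^ k" using assms by (simp add: power_mono)
  have "a * b ^ k \<le> a * a ^ k" "b * b ^ k \<le> a * b ^ k"
    using \<open>b ^ k \<le> a ^ k\<close> assms by (simp_all add: mult_right_mono)
  then have "a ^ Suc k - b ^ Suc k = a * (a ^ k - b ^ k) + (a - b) * b ^ k"
    by (simp add: diff_mult_distrib diff_mult_distrib2)
  also have "\<dots> \<le> a * (k * (a - b) * a ^ (k - 1)) + (a - b) * a ^ k"
    using Suc.IH \<open>b ^ k \<le> a ^ k\<close> by (intro add_mono mult_left_mono) simp_all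
  also have "a * (k * (a - b) * a ^ (k - 1)) = k * (a - b) * a ^ k"
    by (cases k) simp_all
  also have "k * (a - b) * a ^ k + (a - b) * a ^ k = Suc k * (a - b) * a ^ (Suc k - 1)"
    by (simp add: distrib_right)
  finally show ?case .
qed

lemma card_cube_diff_le:
  assumes "L \<le> N"
  shows "card (cube k N - cube k (N - L)) \<le> k * (2 * L) * (2 * N + 1) ^ (k - 1)"
proof -
  have "card (cube k N - cube k (N - L)) = (2 * N + 1) ^ k - (2 * (N - L) + 1) ^ k"
    using card_Diff_subset[OF finite_cube cube_mono] card_cube by simp
  also have "\<dots> \<le> k * ((2 * N + 1) - (2 * (N - L) + 1)) * (2 * N + 1) ^ (k - 1)"
    by (rule power_diff_le_mult) simp
  also have "(2 * N + 1) - (2 * (N - L) + 1) = 2 * L" using assms by simp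
  finally show ?thesis .
qed

section \<open>Expansive actions\<close>

lemma continuous_Zk_actionD:
  assumes "continuous_Zk_action k X T" "u \<in> Zk k"
  shows "continuous_on X (T u)" "T u \<in> X \<rightarrow> X"
  using assms unfolding continuous_Zk_action_def by auto

lemma continuous_Zk_action_add:
  assumes "continuous_Zk_action k X T" "u \<in> Zk k" "v \<in> Zk k" "x \<in> X"
  shows "T (\<lambda>i. u i + v i) x = T u (T v x)"
  using assms unfolding continuous_Zk_action_def by blast

lemma closed_close_pairs:
  fixes f :: "'i \<Rightarrow> 'a::metric_space \<Rightarrow> 'b::metric_space"
  assumes X: "compact X" and cont: "\<forall>u\<in>A. continuous_on X (f u)"
  shows "closed {p \<in> X \<times> X. \<forall>u\<in>A. dist (f u (fst p)) (f u (snd p)) \<le> r}"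
proof -
  have XX: "closed (X \<times> X)" using compact_imp_closed[OF compact_Times[OF X X]] .
  have "closed ((X \<times> X) \<inter> (\<lambda>p. dist (f u (fst p)) (f u (snd p))) -` {..r})" if "u \<in> A" for u
  proof -
    have "continuous_on (X \<times> X) (\<lambda>p. f u (fst p))" "continuous_on (X \<times> X) (\<lambda>p. f u (snd p))"
      using cont that
      by (auto intro!: continuous_on_compose2[of X "f u", OF _ continuous_on_fst[OF continuous_on_id]]
          continuous_on_compose2[of X "f u", OF _ continuous_on_snd[OF continuous_on_id]])
    then have "continuous_on (X \<times> X) (\<lambda>p. dist (f u (fst p)) (f u (snd p)))"
      by (rule continuous_on_dist)
    then show ?thesis
      by (rule closedin_closed_trans[OF continuous_closedin_preimage XX]) simp
  qed
  then have "closed ((X \<times> X) \<inter> (\<Inter>u\<in>A. (X \<times> X) \<inter> (\<lambda>p. dist (f u (fst p)) (f u (snd p))) -` {..r}))"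
    using XX by (intro closed_Int closed_INT) blast+
  also have "(X \<times> X) \<inter> (\<Inter>u\<in>A. (X \<times> X) \<inter> (\<lambda>p. dist (f u (fst p)) (f u (snd p))) -` {..r}) =
      {p \<in> X \<times> X. \<forall>u\<in>A. dist (f u (fst p)) (f u (snd p)) \<le> r}"
    by auto
  finally show ?thesis .
qed

text \<open>The pairs that are r-close along cube k L but \<epsilon>-apart form a decreasing sequence of
  compact sets, whose intersection is empty by expansivity.\<close>
lemma uniformly_expansive:
  fixes X :: "'a::metric_space set"
  assumes X: "compact X" and cont: "\<forall>u\<in>Zk k. continuous_on X (T u)" and \<epsilon>: "0 < \<epsilon>"
    and exp: "\<forall>x\<in>X. \<forall>y\<in>X. x \<noteq> y \<longrightarrow> (SUP u\<in>Zk k. dist (T u x) (T u y)) > r"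
  shows "\<exists>L. \<forall>x\<in>X. \<forall>y\<in>X. (\<forall>v\<in>cube k L. dist (T v x) (T v y) \<le> r) \<longrightarrow> dist x y < \<epsilon>"
proof (rule ccontr)
  assume contra: "\<not> ?thesis"
  define K where "K L = {p \<in> X \<times> X. \<forall>v\<in>cube k L. dist (T v (fst p)) (T v (snd p)) \<le> r} \<inter>
                    {p. \<epsilon> \<le> dist (fst p) (snd p)}" for L
  have closed_K: "closed (K L)" for L
    unfolding K_def using cont cube_subset_Zk
    by (intro closed_Int closed_close_pairs[OF X] closed_Collect_le continuous_intros) blast+
  have fip: "(X \<times> X) \<inter> \<Inter>F \<noteq> {}" if F: "finite F" "F \<subseteq> range K" for F
  proof -
    obtain Ls where Ls: "finite Ls" "F = K ` Ls" using finite_subset_image[OF F] by auto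
    define M where "M = Max (insert 0 Ls)"
    have "K M \<subseteq> K L" if "L \<in> Ls" for L
      using cube_mono[of L M k] that Ls(1) unfolding K_def M_def by auto
    then have "K M \<subseteq> (X \<times> X) \<inter> \<Inter>F" using Ls(2) unfolding K_def by auto
    moreover obtain x y where "x \<in> X" "y \<in> X" "\<forall>v\<in>cube k M. dist (T v x) (T v y) \<le> r"
      "\<not> dist x y < \<epsilon>"
      using contra by blast
    then have "(x, y) \<in> K M" unfolding K_def by simp
    ultimately show ?thesis by blast
  qed
  have "(X \<times> X) \<inter> \<Inter>(range K) \<noteq> {}"
    by (rule compact_imp_fip[OF compact_Times[OF X X]]) (use closed_K fip in auto)
  then obtain x y where xy: "x \<in> X" "y \<in> X" and "\<forall>L. (x, y) \<in> K L" by auto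
  then have far: "\<epsilon> \<le> dist x y" and close: "\<And>u L. u \<in> cube k L \<Longrightarrow> dist (T u x) (T u y) \<le> r"
    unfolding K_def by auto
  have "(SUP u\<in>Zk k. dist (T u x) (T u y)) \<le> r"
    using Zk_in_some_cube close zero_in_cube cube_subset_Zk by (intro cSUP_least) blast+
  with exp xy far \<epsilon> show False by fastforce
qed

lemma dist_action_interior_lt:
  assumes act: "continuous_Zk_action k X T" and LN: "L \<le> N"
    and L: "\<forall>x\<in>X. \<forall>y\<in>X. (\<forall>v\<in>cube k L. dist (T v x) (T v y) \<le> r) \<longrightarrow> dist x y < \<epsilon>"
    and xy: "x \<in> X" "y \<in> X" and close: "\<forall>w\<in>cube k N. dist (T w x) (T w y) \<le> r"
    and u: "u \<in> cube k (N - L)"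
  shows "dist (T u x) (T u y) < \<epsilon>"
proof -
  have uZ: "u \<in> Zk k" using u cube_subset_Zk by blast
  have "dist (T v (T u x)) (T v (T u y)) \<le> r" if v: "v \<in> cube k L" for v
  proof -
    have vZ: "v \<in> Zk k" using v cube_subset_Zk by blast
    have "dist (T (\<lambda>i. v i + u i) x) (T (\<lambda>i. v i + u i) y) \<le> r"
      using close cube_add[OF u v LN] by blast
    then show ?thesis
      by (simp only: continuous_Zk_action_add[OF act vZ uZ xy(1)]
          continuous_Zk_action_add[OF act vZ uZ xy(2)])
  qed
  moreover have "T u x \<in> X" "T u y \<in> X"
    using funcset_mem[OF continuous_Zk_actionD(2)[OF act uZ]] xy by blast+
  ultimately show ?thesis using L by blast
qed

lemma dist_cube_lt_if_refines:
  assumes act: "continuous_Zk_action k X T" and LN: "L \<le> N"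
    and L: "\<forall>x\<in>X. \<forall>y\<in>X. (\<forall>v\<in>cube k L. dist (T v x) (T v y) \<le> 2 * c) \<longrightarrow> dist x y < c"
    and \<alpha>: "\<forall>U\<in>\<alpha>. \<forall>x\<in>U. \<forall>y\<in>U. dist x y < c"
    and V: "V \<subseteq> X" "\<forall>u\<in>cube k N - cube k (N - L). \<exists>U\<in>\<alpha>. V \<subseteq> X \<inter> T u -` U"
    and xy: "x \<in> V" "y \<in> V" and close: "\<forall>u\<in>cube k N. dist (T u x) (T u y) < 2 * c"
  shows "\<forall>u\<in>cube k N. dist (T u x) (T u y) < c"
proof
  fix u assume u: "u \<in> cube k N"
  show "dist (T u x) (T u y) < c"
  proof (cases "u \<in> cube k (N - L)")
    case True
    have "\<forall>w\<in>cube k N. dist (T w x) (T w y) \<le> 2 * c" using close by (simp add: less_imp_le)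
    with True V(1) xy show ?thesis using dist_action_interior_lt[OF act LN L] by blast
  next
    case False
    then obtain U where "U \<in> \<alpha>" "V \<subseteq> X \<inter> T u -` U" using V(2) u by blast
    then show ?thesis using \<alpha> xy by blast
  qed
qed

lemma widim_cube_le_card_boundary:
  fixes X :: "'a::metric_space set"
  assumes X: "compact X" and act: "continuous_Zk_action k X T" and c: "0 < c" and LN: "L \<le> N"
    and L: "\<forall>x\<in>X. \<forall>y\<in>X. (\<forall>v\<in>cube k L. dist (T v x) (T v y) \<le> 2 * c) \<longrightarrow> dist x y < c"
    and \<alpha>: "finite \<alpha>" "open_cover_of X \<alpha>" "\<forall>U\<in>\<alpha>. \<forall>x\<in>U. \<forall>y\<in>U. dist x y < c"
  shows "widim (2 * c) X (dT T (cube k N)) \<le> enat (card (cube k N - cube k (N - L)) * card \<alpha>)"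
proof -
  define B where "B = cube k N - cube k (N - L)"
  define \<U> where "\<U> u = (\<lambda>U. X \<inter> T u -` U) ` \<alpha>" for u
  have cov: "open_cover_of X (\<U> u)" if "u \<in> B" for u
  proof -
    have u: "u \<in> Zk k" using that cube_subset_Zk unfolding B_def by blast
    show ?thesis
      unfolding \<U>_def by (rule open_cover_of_preimage[OF continuous_Zk_actionD[OF act u] \<alpha>(2)])
  qed
  have fin: "finite (\<U> u)" for u unfolding \<U>_def using \<alpha>(1) by (rule finite_imageI)
  have mult: "multiplicity_le (\<U> u) (card \<alpha>)" for u
    by (rule multiplicity_le_card[OF fin]) (simp add: \<U>_def card_image_le \<alpha>(1))
  have "finite B" unfolding B_def by (rule finite_Diff[OF finite_cube])
  then obtain \<V> where \<V>: "open_cover_of X \<V>" "multiplicity_le \<V> (Suc (card B * card \<alpha>))"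
    and refines: "\<forall>V\<in>\<V>. \<forall>u\<in>B. \<exists>U\<in>\<U> u. V \<subseteq> U"
    using compact_common_refinement[of X B \<U> "card \<alpha>", OF X _ fin cov mult] by blast
  have gap: "\<forall>V\<in>\<V>. \<forall>x\<in>V. \<forall>y\<in>V. (\<forall>u\<in>cube k N. dist (T u x) (T u y) < 2 * c) \<longrightarrow>
      (\<forall>u\<in>cube k N. dist (T u x) (T u y) < c)"
  proof (intro ballI impI)
    fix V x y u assume V: "V \<in> \<V>" and xy: "x \<in> V" "y \<in> V"
      and close: "\<forall>u\<in>cube k N. dist (T u x) (T u y) < 2 * c" and u: "u \<in> cube k N"
    have "V \<subseteq> X" using \<V>(1) V unfolding open_cover_of_def by blast
    moreover have "\<forall>u\<in>cube k N - cube k (N - L). \<exists>U\<in>\<alpha>. V \<subseteq> X \<inter> T u -` U"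
      using refines V unfolding \<U>_def B_def by blast
    ultimately show "dist (T u x) (T u y) < c"
      using dist_cube_lt_if_refines[OF act LN L \<alpha>(3) _ _ xy close] u by blast
  qed
  have "\<forall>u\<in>cube k N. continuous_on X (T u)"
    using continuous_Zk_actionD(1)[OF act] cube_subset_Zk by blast
  then obtain \<W> where \<W>: "open_cover_of X \<W>" "multiplicity_le \<W> (Suc (card B * card \<alpha>))"
    and small: "\<forall>W\<in>\<W>. \<forall>y\<in>W. \<forall>z\<in>W. \<forall>u\<in>cube k N. dist (T u y) (T u z) < c"
    using refine_cover_by_gap[OF finite_cube _ c \<V> gap] by blast
  have "dT T (cube k N) y z \<le> 2 * c" if "W \<in> \<W>" "y \<in> W" "z \<in> W" for W y z
    unfolding dT_def
  proof (rule cSUP_least)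
    show "cube k N \<noteq> {}" using zero_in_cube by blast
    show "dist (T u y) (T u z) \<le> 2 * c" if "u \<in> cube k N" for u
    proof -
      have "dist (T u y) (T u z) < c" using small \<open>W \<in> \<W>\<close> \<open>y \<in> W\<close> \<open>z \<in> W\<close> that by blast
      with c show ?thesis by linarith
    qed
  qed
  then have "widim (2 * c) X (dT T (cube k N)) \<le> enat (card B * card \<alpha>)"
    by (intro widim_le_multiplicity[OF \<W>, of "dT T (cube k N)" "2 * c"]) blast
  then show ?thesis unfolding B_def .
qed

lemma limsup_ratio_finite:
  fixes w :: "nat \<Rightarrow> enat"
  assumes "\<forall>\<^sub>F N in sequentially. w N \<le> enat (C * N ^ j)"
  shows "limsup (\<lambda>N. ereal_of_enat (w N) / ereal (real N ^ j)) < \<infinity>"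
proof -
  have "\<forall>\<^sub>F N in sequentially. ereal_of_enat (w N) / ereal (real N ^ j) \<le> ereal (real C)"
    using assms eventually_gt_at_top[of 0]
  proof eventually_elim
    case (elim N)
    then obtain n where n: "w N = enat n" "n \<le> C * N ^ j" using enat_ile by fastforce
    then have "real n \<le> real C * real N ^ j" by (metis of_nat_le_iff of_nat_mult of_nat_power)
    with elim(2) show ?case by (simp add: n(1) ereal_divide divide_le_eq)
  qed
  then have "limsup (\<lambda>N. ereal_of_enat (w N) / ereal (real N ^ j)) \<le> ereal (real C)"
    by (rule Limsup_bounded)
  then show ?thesis by (rule order.strict_trans1) simp
qed

theorem proposition3p3:
  fixes X :: "'a::metric_space set" and k :: nat
    and T :: "(nat \<Rightarrow> int) \<Rightarrow> 'a \<Rightarrow> 'a" and c :: real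
  assumes "compact X"
    and "k \<ge> 1"
    and "continuous_Zk_action k X T"
    and "c > 0"
    and "\<forall>x\<in>X. \<forall>y\<in>X. x \<noteq> y \<longrightarrow> (SUP u\<in>Zk k. dist (T u x) (T u y)) > 2 * c"
  shows "limsup (\<lambda>N::nat. ereal_of_enat (widim (2 * c) X (dT T (cube k N)))
                    / ereal (real N ^ (k - 1))) < \<infinity>"
proof -
  note X = assms(1) and act = assms(3) and c = assms(4)
  have "\<forall>u\<in>Zk k. continuous_on X (T u)" using continuous_Zk_actionD(1)[OF act] by blast
  then obtain L where L: "\<forall>x\<in>X. \<forall>y\<in>X. (\<forall>v\<in>cube k L. dist (T v x) (T v y) \<le> 2 * c) \<longrightarrow> dist x y < c"
    using uniformly_expansive[OF X _ c assms(5)] by blast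
  obtain \<alpha> where \<alpha>: "finite \<alpha>" "open_cover_of X \<alpha>" "\<forall>U\<in>\<alpha>. \<forall>x\<in>U. \<forall>y\<in>U. dist x y < c"
    using compact_small_finite_open_cover[OF X c] by blast
  define C where "C = k * (2 * L) * 3 ^ (k - 1) * card \<alpha>"
  have "widim (2 * c) X (dT T (cube k N)) \<le> enat (C * N ^ (k - 1))" if N: "max L 1 \<le> N" for N
  proof -
    have "widim (2 * c) X (dT T (cube k N)) \<le> enat (card (cube k N - cube k (N - L)) * card \<alpha>)"
      using N by (intro widim_cube_le_card_boundary[OF X act c _ L \<alpha>]) simp
    also have "card (cube k N - cube k (N - L)) \<le> k * (2 * L) * (2 * N + 1) ^ (k - 1)"
      using N by (intro card_cube_diff_le) simp
    also have "(2 * N + 1) ^ (k - 1) \<le> (3 * N) ^ (k - 1)"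
      using N by (intro power_mono) simp_all
    finally show ?thesis
      unfolding C_def by (simp add: power_mult_distrib mult_ac)
  qed
  then show ?thesis by (intro limsup_ratio_finite eventually_sequentiallyI)
qed

end
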